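(* Consider the $2\times 1$ merge network with parameters $c>0$, $k>0$, $\eta\in(0,\tfrac12)$, constant downstream queue length $Q\ge0$, upstream capacities $c_1=c$, $c_2=kc$, inflows $f_i=\eta c_i$, and weights $\gamma_0,\gamma_1,\gamma_2>0$, operated under the generalized backpressure rule, in regime R1 with unsaturated upstream queue $u$ and saturated upstream queue $s$. Suppose that at time $t\ge1$, $p_{max}(t)=p_s(t)$ and the saturated queue is the one activated, i.e. $i^*(t)=s$. Then: (a) if $q_u(t)>f_u$, then $\tilde p_{max}(t+2)<p_{max}(t)$; (b) if $q_u(t)=f_u$ and $\Delta p(t)=0$, then $i^*(t+1)=i^*(t+2)=u$. In other words, $q_s$ is activated at most once consecutively and it is followed by two activations of $q_u$.
   Context: Model: discrete time; two upstream queues $q_1(t),q_2(t)\ge0$ merge into a downstream queue of constant length $Q$. Priorities: $p_i(t)=(\gamma_i q_i(t)-\gamma_0 Q)c_i$. At each step exactly one upstream queue, denoted $i^*(t)$, is activated, one of maximal priority (ties broken arbitrarily); the activated queue evolves as $q_i(t+1)=q_i(t)-\min(q_i(t),c_i)+f_i$, the other as $q_j(t+1)=q_j(t)+f_j$. $p_{max}(t)=\max_i p_i(t)$; $\tilde p_{max}(t)=\min_{v\in\{t-1,t\}}p_{max}(v)$; $\Delta p(t)=p_{i^*(t)}(t)-p_j(t)$ with $j$ the non-activated queue. $f_u$ is the minimal possible length $q_{u,min}$ of queue $u$. Regime R1: exactly one upstream queue, $u$, is unsaturated (outflow $\min(q_u,c_u)<c_u$), the other, $s$, is saturated (outflow equal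 to $c_s$ when activated). *)

theory Defs
  imports Complex_Main
begin

text \<open>Upstream queues are indexed by 1 and 2; index 0 is used
for the downstream weight gamma_0. q i t is the length of upstream queue i at time t,
cap i is its capacity c_i, f i its inflow, act t the activated queue i^*(t).\<close>

definition other :: "nat \<Rightarrow> nat" where
  "other i = (if i = 1 then 2 else 1)"

definition prio :: "(nat \<Rightarrow> real) \<Rightarrow> real \<Rightarrow> (nat \<Rightarrow> real) \<Rightarrow> (nat \<Rightarrow> nat \<Rightarrow> real)
                     \<Rightarrow> nat \<Rightarrow> nat \<Rightarrow> real" where
  "prio \<gamma> Q cap q i t = (\<gamma> i * q i t - \<gamma> 0 * Q) * cap i"

definition pmax :: "(nat \<Rightarrow> real) \<Rightarrow> real \<Rightarrow> (nat \<Rightarrow> real) \<Rightarrow> (nat \<Rightarrow> nat \<Rightarrow> real)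
                     \<Rightarrow> nat \<Rightarrow> real" where
  "pmax \<gamma> Q cap q t = max (prio \<gamma> Q cap q 1 t) (prio \<gamma> Q cap q 2 t)"

text \<open>tilde p_max(t) = min over v in {t-1, t} of p_max(v) (meaningful for t >= 1).\<close>
definition ptilde :: "(nat \<Rightarrow> real) \<Rightarrow> real \<Rightarrow> (nat \<Rightarrow> real) \<Rightarrow> (nat \<Rightarrow> nat \<Rightarrow> real)
                     \<Rightarrow> nat \<Rightarrow> real" where
  "ptilde \<gamma> Q cap q t = min (pmax \<gamma> Q cap q (t - 1)) (pmax \<gamma> Q cap q t)"

definition dp :: "(nat \<Rightarrow> real) \<Rightarrow> real \<Rightarrow> (nat \<Rightarrow> real) \<Rightarrow> (nat \<Rightarrow> nat \<Rightarrow> real)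
                     \<Rightarrow> (nat \<Rightarrow> nat) \<Rightarrow> nat \<Rightarrow> real" where
  "dp \<gamma> Q cap q act t = prio \<gamma> Q cap q (act t) t - prio \<gamma> Q cap q (other (act t)) t"

definition gbp :: "(nat \<Rightarrow> real) \<Rightarrow> real \<Rightarrow> (nat \<Rightarrow> real) \<Rightarrow> (nat \<Rightarrow> real)
                    \<Rightarrow> (nat \<Rightarrow> nat \<Rightarrow> real) \<Rightarrow> (nat \<Rightarrow> nat) \<Rightarrow> bool" where
  "gbp \<gamma> Q cap f q act \<longleftrightarrow>
     (\<forall>t. \<forall>i\<in>{1,2}. q i t \<ge> 0) \<and>
     (\<forall>t. act t \<in> {1,2} \<and>
          (\<forall>i\<in>{1,2}. prio \<gamma> Q cap q i t \<le> prio \<gamma> Q cap q (act t) t) \<and>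
          q (act t) (t+1) = q (act t) t - min (q (act t) t) (cap (act t)) + f (act t) \<and>
          q (other (act t)) (t+1) = q (other (act t)) t + f (other (act t)))"

definition regime_R1 :: "(nat \<Rightarrow> real) \<Rightarrow> (nat \<Rightarrow> nat \<Rightarrow> real) \<Rightarrow> (nat \<Rightarrow> nat)
                          \<Rightarrow> nat \<Rightarrow> nat \<Rightarrow> bool" where
  "regime_R1 cap q act u s \<longleftrightarrow>
     {u, s} = {1, 2} \<and> u \<noteq> s \<and>
     (\<forall>t. min (q u t) (cap u) < cap u) \<and>
     (\<forall>t. act t = s \<longrightarrow> min (q s t) (cap s) = cap s)"

end

theory Submission
  imports Defs
begin

text \<open>A priority is an increasing affine function of its queue length, so everything reduces
to the queue dynamics. Activating the unsaturated queue u empties it down to its inflow f_u,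
while activating the saturated queue s lowers q_s by c_s - f_s; since 2 f_s < c_s, q_s is
strictly lower two steps after an activation of s, whichever queue is activated in between.
(a) If s is activated again, p_max drops at once; otherwise q_u has been reset to f_u < q_u(t),
so both priorities, hence p_max, are lower at t+2.
(b) When q_u(t) = f_u and both priorities tie at t, p_s strictly drops while p_u does not,
and after the activation of u at t+1, p_u is back at its value at t while p_s is still below.\<close>

lemma prio_less_prio_iff:
  assumes "\<gamma> i > 0" and "cap i > 0"
  shows "prio \<gamma> Q cap q i t' < prio \<gamma> Q cap q i t \<longleftrightarrow> q i t' < q i t"
  using assms by (simp add: prio_def)

lemma prio_eq_prio_iff:
  assumes "\<gamma> i > 0" and "cap i > 0"
  shows "prio \<gamma> Q cap q i t' = prio \<gamma> Q cap q i t \<longleftrightarrow> q i t' = q i t"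
  using assms by (simp add: prio_def)

locale gbp_regime_R1 =
  fixes \<gamma> :: "nat \<Rightarrow> real" and Q :: real and cap f :: "nat \<Rightarrow> real"
    and q :: "nat \<Rightarrow> nat \<Rightarrow> real" and act :: "nat \<Rightarrow> nat" and u s :: nat
  assumes gbp: "gbp \<gamma> Q cap f q act"
    and R1: "regime_R1 cap q act u s"
    and weight_pos: "\<gamma> u > 0" "\<gamma> s > 0"
    and cap_s_pos: "cap s > 0"
    and inflow_s_less: "2 * f s < cap s"
begin

abbreviation p :: "nat \<Rightarrow> nat \<Rightarrow> real" where
  "p \<equiv> prio \<gamma> Q cap q"

lemma u_s_cases: "(u = 1 \<and> s = 2) \<or> (u = 2 \<and> s = 1)"
  using R1 unfolding regime_R1_def by (metis doubleton_eq_iff)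

lemma other_s [simp]: "other s = u" and other_u [simp]: "other u = s"
  using u_s_cases by (auto simp: other_def)

lemma act_cases: "act t = u \<or> act t = s"
  using gbp u_s_cases unfolding gbp_def by blast

lemma prio_le_prio_act: "p u t \<le> p (act t) t" "p s t \<le> p (act t) t"
  using gbp u_s_cases unfolding gbp_def by auto

lemma act_eq_u_if_prio_less: "p s t < p u t \<Longrightarrow> act t = u"
  using act_cases[of t] prio_le_prio_act(1)[of t] by auto

lemma pmax_eq_prio_act: "pmax \<gamma> Q cap q t = p (act t) t"
  using act_cases prio_le_prio_act u_s_cases unfolding pmax_def
  by (metis max.absorb1 max.absorb2)

lemma q_u_nonneg: "q u t \<ge> 0"
  using gbp u_s_cases unfolding gbp_def by auto

lemma q_u_less_cap: "q u t < cap u"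
  using R1 unfolding regime_R1_def by (simp add: min_less_iff_disj)

lemma cap_u_pos: "cap u > 0"
  using q_u_nonneg q_u_less_cap by (rule le_less_trans)

lemma q_step_act:
  "q (act t) (t + 1) = q (act t) t - min (q (act t) t) (cap (act t)) + f (act t)"
  and q_step_other: "q (other (act t)) (t + 1) = q (other (act t)) t + f (other (act t))"
  using gbp unfolding gbp_def by blast+

lemma q_u_after_u: "act t = u \<Longrightarrow> q u (t + 1) = f u"
  using q_step_act[of t] q_u_less_cap[of t] by simp

lemma q_u_after_s: "act t = s \<Longrightarrow> q u (t + 1) = q u t + f u"
  using q_step_other[of t] by simp

lemma q_s_after_u: "act t = u \<Longrightarrow> q s (t + 1) = q s t + f s"
  using q_step_other[of t] by simp

lemma q_s_after_s: "act t = s \<Longrightarrow> q s (t + 1) = q s t - (cap s - f s)"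
  using R1 q_step_act[of t] unfolding regime_R1_def by simp

lemma q_s_decreases_after_s: "act t = s \<Longrightarrow> q s (t + 1) < q s t"
  using q_s_after_s cap_s_pos inflow_s_less by simp

lemma q_s_decreases_in_two_steps:
  assumes "act t = s"
  shows "q s (t + 2) < q s t"
  using act_cases[of "t + 1"]
proof
  assume "act (t + 1) = u"
  then have "q s (t + 2) = q s t - (cap s - 2 * f s)"
    using q_s_after_u[of "t + 1"] q_s_after_s[OF assms] by simp
  with inflow_s_less show ?thesis by simp
next
  assume "act (t + 1) = s"
  then show ?thesis
    using q_s_decreases_after_s[of "t + 1"] q_s_decreases_after_s[OF assms] by simp
qed

lemma ptilde_less_pmax_after_s:
  assumes act_s: "act t = s" and "f u < q u t"
  shows "ptilde \<gamma> Q cap q (t + 2) < pmax \<gamma> Q cap q t"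
  using act_cases[of "t + 1"]
proof
  assume "act (t + 1) = s"
  then have "pmax \<gamma> Q cap q (t + 1) = p s (t + 1)"
    by (simp add: pmax_eq_prio_act)
  also have "\<dots> < p s t"
    using q_s_decreases_after_s[OF act_s] weight_pos cap_s_pos by (simp add: prio_less_prio_iff)
  also have "\<dots> = pmax \<gamma> Q cap q t"
    using act_s by (simp add: pmax_eq_prio_act)
  finally show ?thesis
    unfolding ptilde_def by simp
next
  assume "act (t + 1) = u"
  then have "q u (t + 2) < q u t"
    using q_u_after_u[of "t + 1"] \<open>f u < q u t\<close> by simp
  then have "p u (t + 2) < p u t"
    using weight_pos cap_u_pos by (simp add: prio_less_prio_iff)
  moreover have "p s (t + 2) < p s t"
    using q_s_decreases_in_two_steps[OF act_s] weight_pos cap_s_pos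
    by (simp add: prio_less_prio_iff)
  ultimately have "pmax \<gamma> Q cap q (t + 2) < pmax \<gamma> Q cap q t"
    using act_cases[of "t + 2"] prio_le_prio_act[of t] by (auto simp: pmax_eq_prio_act)
  then show ?thesis
    unfolding ptilde_def by simp
qed

lemma act_u_twice_after_tie:
  assumes act_s: "act t = s" and q_u_eq: "q u t = f u" and tie: "p u t = p s t"
  shows "act (t + 1) = u \<and> act (t + 2) = u"
proof -
  have "q u t \<le> q u (t + 1)"
    using q_u_after_s[OF act_s] q_u_eq q_u_nonneg[of t] by simp
  then have "p u t \<le> p u (t + 1)"
    using weight_pos cap_u_pos by (simp add: prio_def)
  moreover have "p s (t + 1) < p s t"
    using q_s_decreases_after_s[OF act_s] weight_pos cap_s_pos by (simp add: prio_less_prio_iff)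
  ultimately have act_next: "act (t + 1) = u"
    using tie by (intro act_eq_u_if_prio_less) simp
  then have "p u (t + 2) = p u t"
    using q_u_after_u[of "t + 1"] q_u_eq weight_pos cap_u_pos by (simp add: prio_eq_prio_iff)
  moreover have "p s (t + 2) < p s t"
    using q_s_decreases_in_two_steps[OF act_s] weight_pos cap_s_pos
    by (simp add: prio_less_prio_iff)
  ultimately have "act (t + 2) = u"
    using tie by (intro act_eq_u_if_prio_less) simp
  with act_next show ?thesis by simp
qed

lemma dp_eq_zero_iff_tie: "act t = s \<Longrightarrow> dp \<gamma> Q cap q act t = 0 \<longleftrightarrow> p u t = p s t"
  by (auto simp: dp_def)

end

theorem corollary1:
  fixes c k \<eta> Q :: real and cap f \<gamma> :: "nat \<Rightarrow> real"
    and q :: "nat \<Rightarrow> nat \<Rightarrow> real" and act :: "nat \<Rightarrow> nat"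
    and u s t :: nat
  assumes "c > 0" and "k > 0" and "0 < \<eta>" and "\<eta> < 1/2" and "Q \<ge> 0"
    and "cap 1 = c" and "cap 2 = k * c"
    and "f 1 = \<eta> * cap 1" and "f 2 = \<eta> * cap 2"
    and "\<gamma> 0 > 0" and "\<gamma> 1 > 0" and "\<gamma> 2 > 0"
    and "gbp \<gamma> Q cap f q act"
    and "regime_R1 cap q act u s"
    and "t \<ge> 1"
    and "pmax \<gamma> Q cap q t = prio \<gamma> Q cap q s t"
    and "act t = s"
  shows "(q u t > f u \<longrightarrow> ptilde \<gamma> Q cap q (t + 2) < pmax \<gamma> Q cap q t)
       \<and> (q u t = f u \<and> dp \<gamma> Q cap q act t = 0 \<longrightarrow> act (t + 1) = u \<and> act (t + 2) = u)"
proof -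
  have "u \<in> {1, 2}" "s \<in> {1, 2}"
    using \<open>regime_R1 cap q act u s\<close> unfolding regime_R1_def by blast+
  then have "\<gamma> u > 0" "\<gamma> s > 0" "cap s > 0" "2 * f s < cap s"
    using assms(1-4,6-12) by (auto simp: field_simps)
  then interpret gbp_regime_R1 \<gamma> Q cap f q act u s
    using assms(13,14) by unfold_locales
  show ?thesis
    using ptilde_less_pmax_after_s act_u_twice_after_tie dp_eq_zero_iff_tie \<open>act t = s\<close>
    by blast
qed

end
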